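(* Let $I$ be a set, $\mathcal{E}=(E_i)_{i\in I}$ a family of nonempty sets, $T$ a multiple relation in $\mathcal{E}$ and $(K,L)$ a bipartition of $J_T$. Then $T$ is scindable along $(K,L)$ if and only if for all $x\in G_{T_{|K}}$ and all $y\in G_{T_{|L}}$ one has $x+y\in G_T$.
   Context: For $J\subseteq I$, $Z_J=\prod_{j\in J}E_j$ ($Z_\emptyset=\{\bullet\}$). For $x\in Z_K$, $y\in Z_L$ with $K\cap L=\emptyset$, $x+y\in Z_{K\cup L}$ is the family agreeing with $x$ on $K$ and with $y$ on $L$. A multiple relation is $R=(J_R,G_R)$ with $G_R\subseteq Z_{J_R}$; $R_{|K}=(K,\{x_{|K}:x\in G_R\})$; $R\bowtie S=(J_R\cup J_S,\{x\in Z_{J_R\cup J_S}: x_{|J_R}\in G_R,\ x_{|J_S}\in G_S\})$. A bipartition of $J$ is a pair of nonempty disjoint subsets with union $J$. $T$ is scindable along $(K,L)$ if $T=R\bowtie S$ for some relations $R,S$ with $J_R=K$, $J_S=L$. *)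

theory Defs
  imports "HOL-Library.FuncSet"
begin

text \<open>Families over an index set are modelled as extensional functions:
  Z_J = PiE J E (functions equal to undefined outside J).
  A multiple relation is a pair (J_R, G_R).\<close>

type_synonym ('i, 'v) mrel = "'i set \<times> ('i \<Rightarrow> 'v) set"

definition Z :: "('i \<Rightarrow> 'v set) \<Rightarrow> 'i set \<Rightarrow> ('i \<Rightarrow> 'v) set" where
  "Z E J = PiE J E"

definition multirel :: "'i set \<Rightarrow> ('i \<Rightarrow> 'v set) \<Rightarrow> ('i, 'v) mrel \<Rightarrow> bool" where
  "multirel I E R \<longleftrightarrow> fst R \<subseteq> I \<and> snd R \<subseteq> Z E (fst R)"

text \<open>x + y for x on K, y on L (K, L disjoint): agrees with x on K, with y elsewhere.\<close>
definition fam_add :: "'i set \<Rightarrow> ('i \<Rightarrow> 'v) \<Rightarrow> ('i \<Rightarrow> 'v) \<Rightarrow> ('i \<Rightarrow> 'v)" where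
  "fam_add K x y = (\<lambda>i. if i \<in> K then x i else y i)"

definition restr :: "('i, 'v) mrel \<Rightarrow> 'i set \<Rightarrow> ('i, 'v) mrel" where
  "restr R K = (K, (\<lambda>x. restrict x K) ` snd R)"

definition join :: "('i \<Rightarrow> 'v set) \<Rightarrow> ('i, 'v) mrel \<Rightarrow> ('i, 'v) mrel \<Rightarrow> ('i, 'v) mrel" where
  "join E R S = (fst R \<union> fst S,
     {x \<in> Z E (fst R \<union> fst S). restrict x (fst R) \<in> snd R \<and> restrict x (fst S) \<in> snd S})"

definition bipartition :: "'i set \<Rightarrow> 'i set \<Rightarrow> 'i set \<Rightarrow> bool" where
  "bipartition J K L \<longleftrightarrow> K \<noteq> {} \<and> L \<noteq> {} \<and> K \<inter> L = {} \<and> K \<union> L = J"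

definition scindable :: "'i set \<Rightarrow> ('i \<Rightarrow> 'v set) \<Rightarrow> ('i, 'v) mrel \<Rightarrow> 'i set \<Rightarrow> 'i set \<Rightarrow> bool" where
  "scindable I E T K L \<longleftrightarrow>
     (\<exists>R S. multirel I E R \<and> multirel I E S \<and> fst R = K \<and> fst S = L \<and> T = join E R S)"

end

theory Submission
  imports Defs
begin

text \<open>A join R \<bowtie> S is closed under gluing: if x is the K-part of some t and y the L-part of
  some t', then x + y has the same K-part as t and the same L-part as t', so it passes both
  membership tests of the join. Conversely, if T is closed under gluing, T coincides with the
  join of its two projections, since every x \<in> Z_J is the sum of its own two projections.\<close>

lemma fam_add_restrict_eq:
  assumes "x \<in> extensional (K \<union> L)"
  shows "fam_add K (restrict x K) (restrict x L) = x"
  using assms by (auto simp: fam_add_def fun_eq_iff extensional_def)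

lemma restrict_fam_add_left: "restrict (fam_add K x y) K = restrict x K"
  by (auto simp: fam_add_def fun_eq_iff)

lemma restrict_fam_add_right:
  assumes "K \<inter> L = {}"
  shows "restrict (fam_add K x y) L = restrict y L"
  using assms by (auto simp: fam_add_def fun_eq_iff)

lemma fam_add_restrict_PiE:
  assumes "s \<in> PiE J E" and "t \<in> PiE J E" and "K \<union> L = J"
  shows "fam_add K (restrict s K) (restrict t L) \<in> PiE J E"
  using assms by (auto simp: fam_add_def PiE_iff extensional_def)

lemma mem_join_iff:
  "x \<in> snd (join E R S) \<longleftrightarrow>
     x \<in> PiE (fst R \<union> fst S) E \<and> restrict x (fst R) \<in> snd R \<and> restrict x (fst S) \<in> snd S"
  by (simp add: join_def Z_def)

lemma fst_restr [simp]: "fst (restr R K) = K"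
  by (simp add: restr_def)

lemma mem_restr_iff: "x \<in> snd (restr R K) \<longleftrightarrow> (\<exists>t \<in> snd R. x = restrict t K)"
  by (auto simp: restr_def)

lemma multirel_restr:
  assumes "multirel I E R" and "K \<subseteq> fst R"
  shows "multirel I E (restr R K)"
  using assms by (force simp: multirel_def restr_def Z_def PiE_iff)

lemma join_fam_add_closed:
  assumes "fst R \<inter> fst S = {}"
    and "x \<in> snd (restr (join E R S) (fst R))" and "y \<in> snd (restr (join E R S) (fst S))"
  shows "fam_add (fst R) x y \<in> snd (join E R S)"
proof -
  obtain s t where s: "s \<in> snd (join E R S)" "x = restrict s (fst R)"
    and t: "t \<in> snd (join E R S)" "y = restrict t (fst S)"
    using assms(2,3) by (auto simp: mem_restr_iff)
  have "restrict (fam_add (fst R) x y) (fst R) = restrict s (fst R)"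
    using s(2) by (simp add: restrict_fam_add_left)
  moreover have "restrict (fam_add (fst R) x y) (fst S) = restrict t (fst S)"
    using t(2) assms(1) by (simp add: restrict_fam_add_right)
  moreover have "fam_add (fst R) x y \<in> PiE (fst R \<union> fst S) E"
    using s t by (simp add: mem_join_iff fam_add_restrict_PiE)
  ultimately show ?thesis
    using s(1) t(1) by (simp add: mem_join_iff)
qed

lemma join_restr_eq:
  assumes T_sub: "snd T \<subseteq> PiE (fst T) E"
    and disj: "K \<inter> L = {}" and cover: "K \<union> L = fst T"
    and closed: "\<forall>x\<in>snd (restr T K). \<forall>y\<in>snd (restr T L). fam_add K x y \<in> snd T"
  shows "join E (restr T K) (restr T L) = T"
proof -
  have "snd (join E (restr T K) (restr T L)) = snd T"
  proof (intro equalityI subsetI)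
    fix x
    assume "x \<in> snd (join E (restr T K) (restr T L))"
    then have x: "x \<in> PiE (fst T) E" "restrict x K \<in> snd (restr T K)" "restrict x L \<in> snd (restr T L)"
      using cover by (simp_all add: mem_join_iff)
    have "fam_add K (restrict x K) (restrict x L) = x"
      using x(1) cover by (intro fam_add_restrict_eq) (simp add: PiE_iff)
    then show "x \<in> snd T"
      using closed x(2,3) by metis
  next
    fix x
    assume "x \<in> snd T"
    then show "x \<in> snd (join E (restr T K) (restr T L))"
      using T_sub cover by (auto simp: mem_join_iff mem_restr_iff)
  qed
  then show ?thesis
    using cover by (simp add: join_def prod_eq_iff)
qed

theorem mainTheorem7:
  fixes I :: "'i set" and E :: "'i \<Rightarrow> 'v set" and T :: "('i, 'v) mrel"
    and K L :: "'i set"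
  assumes "\<forall>i\<in>I. E i \<noteq> {}"
    and "multirel I E T"
    and "bipartition (fst T) K L"
  shows "scindable I E T K L \<longleftrightarrow>
    (\<forall>x\<in>snd (restr T K). \<forall>y\<in>snd (restr T L). fam_add K x y \<in> snd T)"
proof -
  have disj: "K \<inter> L = {}" and cover: "K \<union> L = fst T"
    using assms(3) by (auto simp: bipartition_def)
  show ?thesis
  proof
    assume "scindable I E T K L"
    then obtain R S where "fst R = K" "fst S = L" "T = join E R S"
      by (auto simp: scindable_def)
    then show "\<forall>x\<in>snd (restr T K). \<forall>y\<in>snd (restr T L). fam_add K x y \<in> snd T"
      using disj join_fam_add_closed by blast
  next
    assume closed: "\<forall>x\<in>snd (restr T K). \<forall>y\<in>snd (restr T L). fam_add K x y \<in> snd T"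
    have "T = join E (restr T K) (restr T L)"
      using assms(2) disj cover closed by (intro join_restr_eq[symmetric]) (auto simp: multirel_def Z_def)
    moreover have "multirel I E (restr T K)" "multirel I E (restr T L)"
      using assms(2) cover by (auto intro: multirel_restr)
    ultimately show "scindable I E T K L"
      unfolding scindable_def by (metis fst_restr)
  qed
qed

end
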